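(* For every constant $\epsilon<1$ the following holds. There is no pair of maps $g_r,g_c$, where $g_r$ assigns to each row payoff matrix $R$ (entries in $[0,1]$) a mixed strategy over rows and $g_c$ assigns to each pair $(R,C)$ of payoff matrices a mixed strategy over columns, such that for every bimatrix game $(R,C)$ the profile $(g_r(R),g_c(R,C))$ is an $\epsilon$-well-supported Nash equilibrium. In other words, with unlimited one-way communication (from the row player to the column player) it is impossible to guarantee an $\epsilon$-well-supported Nash equilibrium for any constant $\epsilon<1$.
   Context: A bimatrix game $(R,C)$ has payoff matrices with entries in $[0,1]$; mixed strategies $\mathbf{x},\mathbf{y}$ are probability vectors over rows and columns. For a mixed strategy $\mathbf{y}$ of the column player, row $i$ is an $\epsilon$-best response if $\mathbf{e}_i^TR\mathbf{y}\ge\mathbf{e}_{i'}^TR\mathbf{y}-\epsilon$ for all rows $i'$; similarly for the column player with $C$. $(\mathbf{x},\mathbf{y})$ is an $\epsilon$-well-supported Nash equilibrium if every pure strategy in the support of $\mathbf{x}$ is an $\epsilon$-best response to $\mathbf{y}$ and every pure strategy in the support of $\mathbf{y}$ is an $\epsilon$-best response to $\mathbf{x}$. In one-way communication only the row player sends information, so his output depends only on $R$. *)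

theory Defs
  imports Complex_Main
begin

text \<open>A bimatrix game with n rows and m columns: payoff matrices are functions
  nat \<Rightarrow> nat \<Rightarrow> real, meaningful on indices i < n, j < m.\<close>

definition payoff_matrix :: "nat \<Rightarrow> nat \<Rightarrow> (nat \<Rightarrow> nat \<Rightarrow> real) \<Rightarrow> bool" where
  "payoff_matrix n m A \<longleftrightarrow> (\<forall>i<n. \<forall>j<m. 0 \<le> A i j \<and> A i j \<le> 1)"

definition mixed_strategy :: "nat \<Rightarrow> (nat \<Rightarrow> real) \<Rightarrow> bool" where
  "mixed_strategy n x \<longleftrightarrow> (\<forall>i<n. 0 \<le> x i) \<and> (\<Sum>i<n. x i) = 1"

definition row_payoff :: "nat \<Rightarrow> (nat \<Rightarrow> nat \<Rightarrow> real) \<Rightarrow> (nat \<Rightarrow> real) \<Rightarrow> nat \<Rightarrow> real" where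
  "row_payoff m R y i = (\<Sum>j<m. R i j * y j)"

definition col_payoff :: "nat \<Rightarrow> (nat \<Rightarrow> nat \<Rightarrow> real) \<Rightarrow> (nat \<Rightarrow> real) \<Rightarrow> nat \<Rightarrow> real" where
  "col_payoff n C x j = (\<Sum>i<n. x i * C i j)"

definition eps_WSNE :: "real \<Rightarrow> nat \<Rightarrow> nat \<Rightarrow> (nat \<Rightarrow> nat \<Rightarrow> real) \<Rightarrow> (nat \<Rightarrow> nat \<Rightarrow> real)
    \<Rightarrow> (nat \<Rightarrow> real) \<Rightarrow> (nat \<Rightarrow> real) \<Rightarrow> bool" where
  "eps_WSNE \<epsilon> n m R C x y \<longleftrightarrow>
     mixed_strategy n x \<and> mixed_strategy m y \<and>
     (\<forall>i<n. x i > 0 \<longrightarrow> (\<forall>i'<n. row_payoff m R y i \<ge> row_payoff m R y i' - \<epsilon>)) \<and>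
     (\<forall>j<m. y j > 0 \<longrightarrow> (\<forall>j'<m. col_payoff n C x j \<ge> col_payoff n C x j' - \<epsilon>))"

end

theory Submission
  imports Defs
begin

text \<open>Let the row player's payoff be the identity matrix (he wants to match the column), and
  let the row player commit to \<open>x = g_r(R)\<close>, which plays some row \<open>a\<close> with positive probability.
  Since \<open>g_r\<close> cannot see \<open>C\<close>, we may choose \<open>C\<close> afterwards so that every column except a
  column \<open>b \<noteq> a\<close> pays \<open>0\<close> and \<open>b\<close> pays \<open>1\<close>. As \<open>\<epsilon> < 1\<close>, the column player must play \<open>b\<close> purely,
  and then row \<open>a\<close> earns \<open>0\<close> against \<open>1\<close> for row \<open>b\<close>, so it is not an \<open>\<epsilon>\<close>-best response.\<close>

lemma mixed_strategy_nonneg: "mixed_strategy n x \<Longrightarrow> i < n \<Longrightarrow> 0 \<le> x i"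
  unfolding mixed_strategy_def by blast

lemma mixed_strategy_ex_pos:
  assumes "mixed_strategy n x"
  obtains i where "i < n" "0 < x i"
proof -
  have "\<exists>i<n. 0 < x i"
  proof (rule ccontr)
    assume "\<not> (\<exists>i<n. 0 < x i)"
    then have "\<forall>i<n. x i = 0" using mixed_strategy_nonneg[OF assms] by (meson antisym not_less)
    with assms show False by (simp add: mixed_strategy_def)
  qed
  with that show thesis by blast
qed

lemma mixed_strategy_concentrated:
  assumes "mixed_strategy n y" "b < n" "\<And>j. j < n \<Longrightarrow> j \<noteq> b \<Longrightarrow> y j = 0"
  shows "y b = 1"
proof -
  have "(\<Sum>j<n. y j) = (\<Sum>j\<in>{b}. y j)"
    using assms(2,3) by (intro sum.mono_neutral_right) auto
  with assms(1) show ?thesis by (simp add: mixed_strategy_def)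
qed

lemma eps_WSNE_row_support:
  assumes "eps_WSNE \<epsilon> n m R C x y" "i < n" "i' < n"
    and "row_payoff m R y i + \<epsilon> < row_payoff m R y i'"
  shows "x i = 0"
proof (rule ccontr)
  assume "x i \<noteq> 0"
  moreover have "0 \<le> x i"
    using assms(1,2) mixed_strategy_nonneg unfolding eps_WSNE_def by blast
  ultimately have "0 < x i" by simp
  with assms show False unfolding eps_WSNE_def by force
qed

lemma eps_WSNE_col_support:
  assumes "eps_WSNE \<epsilon> n m R C x y" "j < m" "j' < m"
    and "col_payoff n C x j + \<epsilon> < col_payoff n C x j'"
  shows "y j = 0"
proof (rule ccontr)
  assume "y j \<noteq> 0"
  moreover have "0 \<le> y j"
    using assms(1,2) mixed_strategy_nonneg unfolding eps_WSNE_def by blast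
  ultimately have "0 < y j" by simp
  with assms show False unfolding eps_WSNE_def by force
qed

lemma row_payoff_identity:
  "i < m \<Longrightarrow> row_payoff m (\<lambda>i j. if i = j then 1 else 0) y i = y i"
  unfolding row_payoff_def by (simp add: of_bool_def[symmetric])

lemma col_payoff_row_independent:
  "mixed_strategy n x \<Longrightarrow> col_payoff n (\<lambda>i j. c j) x j = c j"
  unfolding col_payoff_def mixed_strategy_def by (simp add: sum_distrib_right[symmetric])

lemma matching_game_no_eps_WSNE:
  assumes "\<epsilon> < 1" "a < n" "b < n" "a \<noteq> b" "0 < x a"
  shows "\<not> eps_WSNE \<epsilon> n n (\<lambda>i j. if i = j then 1 else 0) (\<lambda>i j. if j = b then 1 else 0) x y"
proof
  assume wsne: "eps_WSNE \<epsilon> n n (\<lambda>i j. if i = j then 1 else 0) (\<lambda>i j. if j = b then 1 else 0) x y"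
  then have mx: "mixed_strategy n x" and my: "mixed_strategy n y"
    by (simp_all add: eps_WSNE_def)
  have "y j = 0" if "j < n" "j \<noteq> b" for j
    using eps_WSNE_col_support[OF wsne that(1) \<open>b < n\<close>] that assms(1)
    by (simp add: col_payoff_row_independent[OF mx])
  then have "y b = 1" "y a = 0"
    using mixed_strategy_concentrated[OF my \<open>b < n\<close>] assms(2,4) by auto
  then have "x a = 0"
    using eps_WSNE_row_support[OF wsne \<open>a < n\<close> \<open>b < n\<close>] assms(1-3)
    by (simp add: row_payoff_identity)
  with \<open>0 < x a\<close> show False by simp
qed

theorem theorem4:
  fixes \<epsilon> :: real
  assumes "\<epsilon> < 1"
  shows "\<not> (\<exists>(g_r :: nat \<Rightarrow> nat \<Rightarrow> (nat \<Rightarrow> nat \<Rightarrow> real) \<Rightarrow> (nat \<Rightarrow> real))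
               (g_c :: nat \<Rightarrow> nat \<Rightarrow> (nat \<Rightarrow> nat \<Rightarrow> real) \<Rightarrow> (nat \<Rightarrow> nat \<Rightarrow> real) \<Rightarrow> (nat \<Rightarrow> real)).
            \<forall>n m R C. 1 \<le> n \<longrightarrow> 1 \<le> m \<longrightarrow> payoff_matrix n m R \<longrightarrow> payoff_matrix n m C \<longrightarrow>
              eps_WSNE \<epsilon> n m R C (g_r n m R) (g_c n m R C))"
proof
  assume "\<exists>g_r g_c. \<forall>n m R C. 1 \<le> n \<longrightarrow> 1 \<le> m \<longrightarrow> payoff_matrix n m R \<longrightarrow>
            payoff_matrix n m C \<longrightarrow> eps_WSNE \<epsilon> n m R C (g_r n m R) (g_c n m R C)"
  then obtain x :: "(nat \<Rightarrow> nat \<Rightarrow> real) \<Rightarrow> nat \<Rightarrow> real"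
      and y :: "(nat \<Rightarrow> nat \<Rightarrow> real) \<Rightarrow> (nat \<Rightarrow> nat \<Rightarrow> real) \<Rightarrow> nat \<Rightarrow> real"
    where wsne: "\<And>R C. payoff_matrix 2 2 R \<Longrightarrow> payoff_matrix 2 2 C \<Longrightarrow> eps_WSNE \<epsilon> 2 2 R C (x R) (y R C)"
    by (metis one_le_numeral)
  define R :: "nat \<Rightarrow> nat \<Rightarrow> real" where "R = (\<lambda>i j. if i = j then 1 else 0)"
  define C :: "nat \<Rightarrow> nat \<Rightarrow> nat \<Rightarrow> real" where "C b = (\<lambda>i j. if j = b then 1 else 0)" for b
  have payoff: "payoff_matrix 2 2 R" "payoff_matrix 2 2 (C b)" for b
    unfolding payoff_matrix_def R_def C_def by auto
  obtain a where "a < 2" "0 < x R a"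
    using wsne[OF payoff] mixed_strategy_ex_pos unfolding eps_WSNE_def by blast
  moreover have "1 - a < 2" "a \<noteq> 1 - a"
    using \<open>a < 2\<close> by arith+
  ultimately have "\<not> eps_WSNE \<epsilon> 2 2 R (C (1 - a)) (x R) (y R (C (1 - a)))"
    using matching_game_no_eps_WSNE[OF assms] unfolding R_def C_def by blast
  with wsne[OF payoff] show False by blast
qed

end
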